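(* Let $G$ be a maximal $1$-plane graph with at least $4$ vertices in which every edge lies in some $K_4$-subgraph, and let $\{G_i\}_{i\in\{0,\dots,N\}}$ be a $K_4$-extension sequence of $G$ determined by the SWM*-rule, with $G_i=G[V(G_{i-1})\cup V(F_i)]$. For $i\in\{1,\dots,N\}$ let $F_i'$ be the subgraph of $G_i$ induced by the edge set $E(G_i)\setminus E(G_{i-1})$. Let $i\in\{1,\dots,N\}$ and $e\in E(F_i)$. Then every cut-vertex $w$ of $F_i'-e$ lies in $V(F_i)\setminus V(G_{i-1})$, and each component of $F_i'-e-w$ contains vertices of $G_{i-1}$.
   Context: A $1$-plane graph is a simple graph drawn in the plane (vertices distinct points, edges arcs joining their ends, no edge crossing itself, two edges crossing at most once, adjacent edges not crossing) so that every edge is crossed at most once; it is maximal if no edge joining two non-adjacent vertices can be added so that the result is still a simple $1$-plane graph. An edge is clean if it crosses no other edge. If edge $ux$ crosses another edge at point $\alpha$, the arc $u\alpha$ is the near half-edge of $ux$ incident with $u$. Two edge segments are consecutive on the boundary of a face if they are consecutive on one of the closed walks forming that boundary. $G[A]$ is the subgraph induced by $A$ (a vertex set), and for an edge set $A$, the subgraph induced by $A$ has edge set $A$ and vertex set the ends of edges in $A$. For a vertex-induced subgraph $G'$ and a $K_4$-subgraph $F$ of $G$ with $1\le|V(F)\cap V(G')|\le 3$, $F$ is a strong/weak/micro $K_4$-link from $G'$ when $|V(F)\cap V(G')|=3/2/1$, and $G[V(G')\cup V(F)]$ is the corresponding $K_4$-extension of $G'$. SWM*-rule for a proper vertex-induced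 subgraph $G'$: choose any strong $K_4$-link from $G'$ if one exists; otherwise any weak one if one exists; otherwise choose $u\in V(G')$ with $N_G(u)\not\subseteq V(G')$, then $x\in N_G(u)\setminus V(G')$ such that for some $w\in N_G(u)\cap V(G')$ the edge $ux$ (or its near half-edge at $u$) and $uw$ (or its near half-edge at $u$) are consecutive on the boundary of some face of $G$; if $ux$ is clean choose any $K_4$-subgraph containing $ux$, and if $ux$ crosses edge $st$ choose $G[\{u,x,s,t\}]$. A $K_4$-extension sequence determined by the SWM*-rule is $G_0\cong K_4$, $G_N=G$, $G_i=G[V(G_{i-1})\cup V(F_i)]$ with $F_i$ a $K_4$-link from $G_{i-1}$ chosen by the SWM*-rule. *)

theory Defs
  imports "HOL-Analysis.Analysis"
begin

text \<open>A graph is given by a vertex set V and an edge set E of 2-element vertex sets.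
  A drawing assigns to each vertex a point p v and to each edge e an arc c e
  (parametrised on [0,1]).\<close>

definition drawing_points :: "'v set \<Rightarrow> 'v set set \<Rightarrow> ('v \<Rightarrow> complex)
    \<Rightarrow> ('v set \<Rightarrow> real \<Rightarrow> complex) \<Rightarrow> complex set" where
  "drawing_points V E p c = p ` V \<union> (\<Union>e\<in>E. path_image (c e))"

definition crosses :: "'v set set \<Rightarrow> ('v set \<Rightarrow> real \<Rightarrow> complex) \<Rightarrow> 'v set \<Rightarrow> 'v set \<Rightarrow> bool" where
  "crosses E c e f \<longleftrightarrow> e \<in> E \<and> f \<in> E \<and> e \<noteq> f \<and> e \<inter> f = {}
      \<and> path_image (c e) \<inter> path_image (c f) \<noteq> {}"

definition clean_edge :: "'v set set \<Rightarrow> ('v set \<Rightarrow> real \<Rightarrow> complex) \<Rightarrow> 'v set \<Rightarrow> bool" where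
  "clean_edge E c e \<longleftrightarrow> \<not> (\<exists>f. crosses E c e f)"

definition one_plane :: "'v set \<Rightarrow> 'v set set \<Rightarrow> ('v \<Rightarrow> complex)
    \<Rightarrow> ('v set \<Rightarrow> real \<Rightarrow> complex) \<Rightarrow> bool" where
  "one_plane V E p c \<longleftrightarrow>
     finite V
   \<and> (\<forall>e\<in>E. \<exists>u v. e = {u, v} \<and> u \<noteq> v \<and> u \<in> V \<and> v \<in> V)
   \<and> inj_on p V
   \<and> (\<forall>e\<in>E. arc (c e) \<and> {pathstart (c e), pathfinish (c e)} = p ` e)
   \<and> (\<forall>e\<in>E. \<forall>v\<in>V. p v \<in> path_image (c e) \<longrightarrow> v \<in> e)
   \<and> (\<forall>e\<in>E. \<forall>f\<in>E. e \<noteq> f \<and> e \<inter> f \<noteq> {} \<longrightarrow>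
          path_image (c e) \<inter> path_image (c f) = p ` (e \<inter> f))
   \<and> (\<forall>e\<in>E. \<forall>f\<in>E. e \<noteq> f \<longrightarrow>
          (\<forall>a b. a \<in> path_image (c e) \<inter> path_image (c f)
               \<and> b \<in> path_image (c e) \<inter> path_image (c f) \<longrightarrow> a = b))
   \<and> (\<forall>e f g. crosses E c e f \<and> crosses E c e g \<longrightarrow> f = g)"

definition maximal_one_plane :: "'v set \<Rightarrow> 'v set set \<Rightarrow> ('v \<Rightarrow> complex)
    \<Rightarrow> ('v set \<Rightarrow> real \<Rightarrow> complex) \<Rightarrow> bool" where
  "maximal_one_plane V E p c \<longleftrightarrow> one_plane V E p c \<and>
     \<not> (\<exists>u v \<gamma>. u \<in> V \<and> v \<in> V \<and> u \<noteq> v \<and> {u, v} \<notin> E \<and>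
            one_plane V (insert {u, v} E) p (c({u, v} := \<gamma>)))"

definition oriented_edge :: "('v \<Rightarrow> complex) \<Rightarrow> ('v set \<Rightarrow> real \<Rightarrow> complex)
    \<Rightarrow> 'v \<Rightarrow> 'v set \<Rightarrow> real \<Rightarrow> complex" where
  "oriented_edge p c u e = (if pathstart (c e) = p u then c e else reversepath (c e))"

text \<open>The edge segment of e at its end u: the whole edge if e is clean, otherwise the
  near half-edge of e incident with u (from p u to the crossing point).\<close>
definition near_segment :: "'v set set \<Rightarrow> ('v \<Rightarrow> complex) \<Rightarrow> ('v set \<Rightarrow> real \<Rightarrow> complex)
    \<Rightarrow> 'v \<Rightarrow> 'v set \<Rightarrow> real \<Rightarrow> complex" where
  "near_segment E p c u e =
     (if clean_edge E c e then oriented_edge p c u e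
      else subpath 0 (SOME t. t \<in> {0..1} \<and>
              (\<exists>f. crosses E c e f \<and> oriented_edge p c u e t \<in> path_image (c f)))
             (oriented_edge p c u e))"

text \<open>The segments of the edges e1, e2 at their common end u are consecutive on the
  boundary walk of some face: there is a wedge at u, bounded by initial pieces of the two
  segments and by an arc through the interior of a face, whose inside contains no point of
  the drawing.\<close>
definition consecutive_at :: "'v set \<Rightarrow> 'v set set \<Rightarrow> ('v \<Rightarrow> complex)
    \<Rightarrow> ('v set \<Rightarrow> real \<Rightarrow> complex) \<Rightarrow> 'v \<Rightarrow> 'v set \<Rightarrow> 'v set \<Rightarrow> bool" where
  "consecutive_at V E p c u e1 e2 \<longleftrightarrow>
     (\<exists>s1 s2 \<gamma>. 0 < s1 \<and> s1 \<le> 1 \<and> 0 < s2 \<and> s2 \<le> 1 \<and> arc \<gamma>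
        \<and> pathstart \<gamma> = near_segment E p c u e1 s1
        \<and> pathfinish \<gamma> = near_segment E p c u e2 s2
        \<and> path_image \<gamma> \<inter> drawing_points V E p c = {pathstart \<gamma>, pathfinish \<gamma>}
        \<and> inside (path_image (subpath 0 s1 (near_segment E p c u e1))
                  \<union> path_image \<gamma>
                  \<union> path_image (subpath 0 s2 (near_segment E p c u e2)))
            \<inter> drawing_points V E p c = {})"

text \<open>A K4-subgraph is identified with its (4-element, pairwise adjacent) vertex set.\<close>
definition isK4 :: "'v set \<Rightarrow> 'v set set \<Rightarrow> 'v set \<Rightarrow> bool" where
  "isK4 V E K \<longleftrightarrow> K \<subseteq> V \<and> card K = 4 \<and> (\<forall>a\<in>K. \<forall>b\<in>K. a \<noteq> b \<longrightarrow> {a, b} \<in> E)"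

definition K4_link :: "'v set \<Rightarrow> 'v set set \<Rightarrow> 'v set \<Rightarrow> 'v set \<Rightarrow> bool" where
  "K4_link V E A K \<longleftrightarrow> isK4 V E K \<and> 1 \<le> card (K \<inter> A) \<and> card (K \<inter> A) \<le> 3"

definition SWM_rule :: "'v set \<Rightarrow> 'v set set \<Rightarrow> ('v \<Rightarrow> complex)
    \<Rightarrow> ('v set \<Rightarrow> real \<Rightarrow> complex) \<Rightarrow> 'v set \<Rightarrow> 'v set \<Rightarrow> bool" where
  "SWM_rule V E p c A F \<longleftrightarrow> A \<subseteq> V \<and> A \<noteq> V \<and> K4_link V E A F \<and>
     (if \<exists>K. K4_link V E A K \<and> card (K \<inter> A) = 3 then card (F \<inter> A) = 3
      else if \<exists>K. K4_link V E A K \<and> card (K \<inter> A) = 2 then card (F \<inter> A) = 2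
      else (\<exists>u x w. u \<in> A \<and> x \<in> V - A \<and> {u, x} \<in> E \<and> w \<in> A \<and> {u, w} \<in> E
              \<and> consecutive_at V E p c u {u, x} {u, w}
              \<and> (if clean_edge E c {u, x} then {u, x} \<subseteq> F
                 else (\<exists>s t. crosses E c {u, x} {s, t} \<and> F = {u, x, s, t}))))"

text \<open>Vertex sets of the graphs G_i of a K4-extension sequence: Q 0 = V(G_0),
  Q i = V(F_i) for i \<ge> 1.\<close>
fun ext_vertices :: "(nat \<Rightarrow> 'v set) \<Rightarrow> nat \<Rightarrow> 'v set" where
  "ext_vertices Q 0 = Q 0"
| "ext_vertices Q (Suc i) = ext_vertices Q i \<union> Q (Suc i)"

definition SWM_sequence :: "'v set \<Rightarrow> 'v set set \<Rightarrow> ('v \<Rightarrow> complex)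
    \<Rightarrow> ('v set \<Rightarrow> real \<Rightarrow> complex) \<Rightarrow> nat \<Rightarrow> (nat \<Rightarrow> 'v set) \<Rightarrow> bool" where
  "SWM_sequence V E p c N Q \<longleftrightarrow> isK4 V E (Q 0)
     \<and> (\<forall>i\<in>{1..N}. SWM_rule V E p c (ext_vertices Q (i - 1)) (Q i))
     \<and> ext_vertices Q N = V"

definition adj_rel :: "'v set \<Rightarrow> 'v set set \<Rightarrow> ('v \<times> 'v) set" where
  "adj_rel Vs Es = {(a, b). a \<in> Vs \<and> b \<in> Vs \<and> {a, b} \<in> Es}"

definition components :: "'v set \<Rightarrow> 'v set set \<Rightarrow> 'v set set" where
  "components Vs Es = {{y \<in> Vs. (x, y) \<in> (adj_rel Vs Es)\<^sup>*} | x. x \<in> Vs}"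

definition delete_vertex_edges :: "'v \<Rightarrow> 'v set set \<Rightarrow> 'v set set" where
  "delete_vertex_edges w Es = {e \<in> Es. w \<notin> e}"

definition cut_vertex :: "'v set \<Rightarrow> 'v set set \<Rightarrow> 'v \<Rightarrow> bool" where
  "cut_vertex Vs Es w \<longleftrightarrow> w \<in> Vs \<and>
     card (components (Vs - {w}) (delete_vertex_edges w Es)) > card (components Vs Es)"

definition induced_edges :: "'v set set \<Rightarrow> 'v set \<Rightarrow> 'v set set" where
  "induced_edges E A = {e \<in> E. e \<subseteq> A}"

end

theory Submission imports Defs begin

(* Write A for V(G_{i-1}) and F for V(F_i).  Every edge of F_i' has an end in F - A, and F is
   a K4, so after deleting one edge e and one vertex w the new vertices remain joined to each
   other and to A by paths of length at most two inside F.  Hence a vertex w of A cannot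
   separate anything, and once w is new, every remaining new vertex still reaches A. *)

lemma sym_adj_rel: "sym (adj_rel Vs Es)"
  unfolding adj_rel_def sym_def by (auto simp: insert_commute)

lemma adj_rel_rtrancl_in_vertices:
  "(x, y) \<in> (adj_rel Vs Es)\<^sup>* \<Longrightarrow> x \<in> Vs \<Longrightarrow> y \<in> Vs"
  by (induction rule: rtrancl_induct) (auto simp: adj_rel_def)

lemma components_meet_if_reaches:
  assumes reach: "\<And>x. x \<in> Vs \<Longrightarrow> \<exists>a\<in>A. (x, a) \<in> (adj_rel Vs Es)\<^sup>*"
    and C: "C \<in> components Vs Es"
  shows "C \<inter> A \<noteq> {}"
proof -
  obtain x where x: "x \<in> Vs" and C_eq: "C = {y \<in> Vs. (x, y) \<in> (adj_rel Vs Es)\<^sup>*}"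
    using C unfolding components_def by blast
  obtain a where "a \<in> A" and xa: "(x, a) \<in> (adj_rel Vs Es)\<^sup>*"
    using reach[OF x] by blast
  moreover have "a \<in> Vs"
    using xa x by (rule adj_rel_rtrancl_in_vertices)
  ultimately show ?thesis
    unfolding C_eq by blast
qed

lemma component_delete_vertex_eq:
  assumes linked: "\<And>x y. x \<in> Vs - {w} \<Longrightarrow> (x, y) \<in> adj_rel Vs Es \<Longrightarrow>
      (x, n0) \<in> (adj_rel (Vs - {w}) (delete_vertex_edges w Es))\<^sup>*"
    and x: "x \<in> Vs - {w}"
  shows "{y \<in> Vs - {w}. (x, y) \<in> (adj_rel (Vs - {w}) (delete_vertex_edges w Es))\<^sup>*}
       = {y \<in> Vs. (x, y) \<in> (adj_rel Vs Es)\<^sup>*} - {w}"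
proof -
  define R where "R = adj_rel Vs Es"
  define Rw where "Rw = adj_rel (Vs - {w}) (delete_vertex_edges w Es)"
  have "Rw \<subseteq> R"
    unfolding Rw_def R_def adj_rel_def delete_vertex_edges_def by auto
  hence "Rw\<^sup>* \<subseteq> R\<^sup>*" by (rule rtrancl_mono)
  moreover have "(x, y) \<in> Rw\<^sup>*" if y: "y \<in> Vs - {w}" and xy: "(x, y) \<in> R\<^sup>*" "x \<noteq> y" for y
  proof -
    from xy obtain z where "(x, z) \<in> R" by (metis converse_rtranclE)
    with x have x_n0: "(x, n0) \<in> Rw\<^sup>*" using linked unfolding R_def Rw_def by blast
    from xy obtain z' where "(z', y) \<in> R" by (metis rtranclE)
    hence "(y, z') \<in> R" using sym_adj_rel unfolding R_def by (metis symD)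
    with y have "(y, n0) \<in> Rw\<^sup>*" using linked unfolding R_def Rw_def by blast
    hence "(n0, y) \<in> Rw\<^sup>*"
      using sym_rtrancl[OF sym_adj_rel] unfolding Rw_def by (metis symD)
    with x_n0 show ?thesis by simp
  qed
  ultimately show ?thesis
    unfolding R_def[symmetric] Rw_def[symmetric] by blast
qed

lemma card_components_delete_vertex_le:
  assumes "finite Vs"
    and linked: "\<And>x y. x \<in> Vs - {w} \<Longrightarrow> (x, y) \<in> adj_rel Vs Es \<Longrightarrow>
      (x, n0) \<in> (adj_rel (Vs - {w}) (delete_vertex_edges w Es))\<^sup>*"
  shows "card (components (Vs - {w}) (delete_vertex_edges w Es)) \<le> card (components Vs Es)"
proof -
  have "components (Vs - {w}) (delete_vertex_edges w Es)
      \<subseteq> (\<lambda>D. D - {w}) ` components Vs Es"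
  proof
    fix C assume "C \<in> components (Vs - {w}) (delete_vertex_edges w Es)"
    then obtain x where x: "x \<in> Vs - {w}"
      and "C = {y \<in> Vs - {w}. (x, y) \<in> (adj_rel (Vs - {w}) (delete_vertex_edges w Es))\<^sup>*}"
      unfolding components_def by blast
    hence "C = {y \<in> Vs. (x, y) \<in> (adj_rel Vs Es)\<^sup>*} - {w}"
      using component_delete_vertex_eq[OF linked x] by simp
    moreover have "{y \<in> Vs. (x, y) \<in> (adj_rel Vs Es)\<^sup>*} \<in> components Vs Es"
      using x unfolding components_def by blast
    ultimately show "C \<in> (\<lambda>D. D - {w}) ` components Vs Es" by blast
  qed
  moreover have "components Vs Es \<subseteq> Pow Vs"
    unfolding components_def by blast
  with \<open>finite Vs\<close> have finite: "finite (components Vs Es)"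
    by (simp add: finite_subset)
  ultimately have "card (components (Vs - {w}) (delete_vertex_edges w Es))
      \<le> card ((\<lambda>D. D - {w}) ` components Vs Es)"
    by (intro card_mono) auto
  also have "\<dots> \<le> card (components Vs Es)"
    using finite by (rule card_image_le)
  finally show ?thesis .
qed

lemma exists_fourth_element:
  assumes "card F = 4"
  shows "\<exists>z\<in>F. z \<noteq> a \<and> z \<noteq> b \<and> z \<noteq> c"
proof (rule ccontr)
  assume "\<not> ?thesis"
  hence "F \<subseteq> {a, b, c}" by auto
  hence "card F \<le> card {a, b, c}" by (intro card_mono) auto
  also have "\<dots> \<le> 3" by (simp add: card_insert_if)
  finally show False using assms by simp
qed

locale K4_extension =
  fixes E :: "'v set set" and A F :: "'v set"
  assumes finite_A: "finite A"
    and card_F: "card F = 4"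
    and F_clique: "\<And>a b. a \<in> F \<Longrightarrow> b \<in> F \<Longrightarrow> a \<noteq> b \<Longrightarrow> {a, b} \<in> E"
    and F_meets_A: "F \<inter> A \<noteq> {}"
    and F_not_subset_A: "\<not> F \<subseteq> A"
begin

definition new_edges :: "'v set set" where
  "new_edges = induced_edges E (A \<union> F) - induced_edges E A"

abbreviation linked_avoiding :: "'v set \<Rightarrow> 'v \<Rightarrow> 'v \<Rightarrow> 'v \<Rightarrow> bool" where
  "linked_avoiding e w x y \<equiv>
     (x, y) \<in> (adj_rel (\<Union>new_edges - {w}) (delete_vertex_edges w (new_edges - {e})))\<^sup>*"

lemma new_edges_vertices: "\<Union>new_edges \<subseteq> A \<union> F"
  unfolding new_edges_def induced_edges_def by auto

lemma finite_new_edges_vertices: "finite (\<Union>new_edges)"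
  using new_edges_vertices finite_A card_F
  by (metis card.infinite finite_UnI finite_subset zero_neq_numeral)

lemma new_edge_has_new_end: "{x, y} \<in> new_edges \<Longrightarrow> x \<in> F - A \<or> y \<in> F - A"
  unfolding new_edges_def induced_edges_def by auto

lemma linked_avoiding_edge:
  assumes "{u, v} \<in> new_edges" "{u, v} \<noteq> e" "u \<noteq> w" "v \<noteq> w"
  shows "linked_avoiding e w u v"
  using assms unfolding adj_rel_def delete_vertex_edges_def by blast

lemma linked_avoiding_in_F:
  assumes "u \<in> F" "v \<in> F" "u \<noteq> v" "u \<notin> A \<or> v \<notin> A" "{u, v} \<noteq> e" "u \<noteq> w" "v \<noteq> w"
  shows "linked_avoiding e w u v"
proof (rule linked_avoiding_edge)
  show "{u, v} \<in> new_edges"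
    using assms F_clique[of u v] unfolding new_edges_def induced_edges_def by auto
qed (use assms in auto)

lemma new_vertices_linked:
  assumes "w \<in> A" and "n \<in> F - A" and "n' \<in> F - A"
  shows "linked_avoiding e w n n'"
proof -
  consider "n = n'" | "n \<noteq> n'" "{n, n'} \<noteq> e" | "n \<noteq> n'" "{n, n'} = e" by blast
  thus ?thesis
  proof cases
    case 2
    with assms show ?thesis using linked_avoiding_in_F[of n n' e w] by auto
  next
    case 3
    obtain z where z: "z \<in> F" "z \<noteq> n" "z \<noteq> n'" "z \<noteq> w"
      using exists_fourth_element[OF card_F] by blast
    have "linked_avoiding e w n z" and "linked_avoiding e w z n'"
      using 3 assms z linked_avoiding_in_F[of n z e w] linked_avoiding_in_F[of z n' e w] by auto
    thus ?thesis by (rule rtrancl_trans)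
  qed simp
qed

lemma new_vertex_linked_to_A:
  assumes "w \<notin> A" and "n \<in> F - A" and "n \<noteq> w"
  shows "\<exists>a\<in>A. linked_avoiding e w n a"
proof -
  obtain a where a: "a \<in> F" "a \<in> A" using F_meets_A by auto
  show ?thesis
  proof (cases "{n, a} = e")
    case False
    with assms a show ?thesis using linked_avoiding_in_F[of n a e w] by auto
  next
    case True
    obtain z where z: "z \<in> F" "z \<noteq> n" "z \<noteq> a" "z \<noteq> w"
      using exists_fourth_element[OF card_F] by blast
    have n_z: "linked_avoiding e w n z"
      using True assms a z linked_avoiding_in_F[of n z e w] by auto
    show ?thesis
    proof (cases "z \<in> A")
      case True
      with n_z show ?thesis by blast
    next
      case False
      have "linked_avoiding e w z a"
        using False \<open>{n, a} = e\<close> assms a z linked_avoiding_in_F[of z a e w] by auto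
      with n_z a show ?thesis by (meson rtrancl_trans)
    qed
  qed
qed

lemma cut_vertex_is_new:
  assumes "cut_vertex (\<Union>new_edges) (new_edges - {e}) w"
  shows "w \<in> F - A"
proof (rule ccontr)
  assume "w \<notin> F - A"
  moreover have "w \<in> A \<union> F"
    using assms new_edges_vertices unfolding cut_vertex_def by auto
  ultimately have "w \<in> A" by blast
  obtain n0 where n0: "n0 \<in> F - A" using F_not_subset_A by auto
  have "linked_avoiding e w x n0"
    if x: "x \<in> \<Union>new_edges - {w}" and xy: "(x, y) \<in> adj_rel (\<Union>new_edges) (new_edges - {e})"
    for x y
  proof -
    have xy_new: "{x, y} \<in> new_edges" "{x, y} \<noteq> e"
      using xy unfolding adj_rel_def by auto
    show ?thesis
      using new_edge_has_new_end[OF xy_new(1)]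
    proof
      assume "x \<in> F - A"
      with \<open>w \<in> A\<close> n0 show ?thesis using new_vertices_linked by blast
    next
      assume y: "y \<in> F - A"
      with \<open>w \<in> A\<close> have "y \<noteq> w" by auto
      with xy_new x have "linked_avoiding e w x y"
        using linked_avoiding_edge by blast
      moreover have "linked_avoiding e w y n0"
        using \<open>w \<in> A\<close> y n0 by (rule new_vertices_linked)
      ultimately show ?thesis by (rule rtrancl_trans)
    qed
  qed
  hence "card (components (\<Union>new_edges - {w}) (delete_vertex_edges w (new_edges - {e})))
      \<le> card (components (\<Union>new_edges) (new_edges - {e}))"
    by (rule card_components_delete_vertex_le[OF finite_new_edges_vertices])
  with assms show False unfolding cut_vertex_def by simp
qed

lemma components_after_cut_meet_A:
  assumes "w \<notin> A"
    and C: "C \<in> components (\<Union>new_edges - {w}) (delete_vertex_edges w (new_edges - {e}))"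
  shows "C \<inter> A \<noteq> {}"
proof (rule components_meet_if_reaches[OF _ C])
  fix x assume x: "x \<in> \<Union>new_edges - {w}"
  show "\<exists>a\<in>A. linked_avoiding e w x a"
  proof (cases "x \<in> A")
    case False
    with x new_edges_vertices have "x \<in> F - A" by blast
    with \<open>w \<notin> A\<close> x show ?thesis using new_vertex_linked_to_A by blast
  qed blast
qed

end

lemma K4_extension_if_K4_link:
  assumes "K4_link V E A F" and "finite A"
  shows "K4_extension E A F"
proof
  show "F \<inter> A \<noteq> {}" and "\<not> F \<subseteq> A"
    using assms(1) unfolding K4_link_def isK4_def by (auto simp: Int_absorb2)
qed (use assms in \<open>auto simp: K4_link_def isK4_def\<close>)

lemma SWM_rule_K4_link: "SWM_rule V E p c A F \<Longrightarrow> A \<subseteq> V \<and> K4_link V E A F"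
  unfolding SWM_rule_def by (elim conjE) (intro conjI)

theorem lemma4p4:
  fixes V :: "'v set" and E :: "'v set set"
    and p :: "'v \<Rightarrow> complex" and c :: "'v set \<Rightarrow> real \<Rightarrow> complex"
    and N :: nat and Q :: "nat \<Rightarrow> 'v set" and i :: nat and e :: "'v set" and w :: 'v
  assumes "maximal_one_plane V E p c"
    and "card V \<ge> 4"
    and "\<forall>f\<in>E. \<exists>K. isK4 V E K \<and> f \<subseteq> K"
    and "SWM_sequence V E p c N Q"
    and "i \<in> {1..N}"
    and "e \<in> induced_edges E (Q i)"
    and "cut_vertex (\<Union>(induced_edges E (ext_vertices Q i) - induced_edges E (ext_vertices Q (i - 1))))
                    (induced_edges E (ext_vertices Q i) - induced_edges E (ext_vertices Q (i - 1)) - {e}) w"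
  shows "w \<in> Q i - ext_vertices Q (i - 1) \<and>
         (\<forall>C \<in> components
                (\<Union>(induced_edges E (ext_vertices Q i) - induced_edges E (ext_vertices Q (i - 1))) - {w})
                (delete_vertex_edges w
                   (induced_edges E (ext_vertices Q i) - induced_edges E (ext_vertices Q (i - 1)) - {e})).
             C \<inter> ext_vertices Q (i - 1) \<noteq> {})"
proof -
  define A where "A = ext_vertices Q (i - 1)"
  have "SWM_rule V E p c A (Q i)"
    using assms(4,5) unfolding SWM_sequence_def A_def by blast
  hence "A \<subseteq> V" and link: "K4_link V E A (Q i)"
    using SWM_rule_K4_link by blast+
  have "finite V"
    using assms(1) unfolding maximal_one_plane_def one_plane_def by (elim conjE)
  with \<open>A \<subseteq> V\<close> have "finite A" by (rule finite_subset)
  with link interpret K4_extension E A "Q i" by (rule K4_extension_if_K4_link)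
  have "ext_vertices Q i = A \<union> Q i"
    using assms(5) unfolding A_def by (cases i) auto
  hence new: "induced_edges E (ext_vertices Q i) - induced_edges E A = new_edges"
    unfolding new_edges_def by simp
  have "w \<in> Q i - A"
    using assms(7) cut_vertex_is_new unfolding new A_def[symmetric] by blast
  with components_after_cut_meet_A show ?thesis
    unfolding new A_def[symmetric] by blast
qed

end
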